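(* For every positive integer $n$, $$\Psi_{\mathbb{Z}_n}(x)=\sum_{d\mid n}\mu\!\left(\frac nd\right)\left((1+x^2)^{\lfloor\frac{d-1}{2}\rfloor}(1+x)^{\frac{1+(-1)^d}{2}}-1\right),$$ and hence $$\mathcal{E}(\mathbb{Z}_n)=\Psi_{\mathbb{Z}_n}(1)=\sum_{d\mid n}\mu\!\left(\frac nd\right)\left(2^{\lfloor d/2\rfloor}-1\right),$$ where $\mu$ is the number-theoretic Möbius function.
   Context: For a finite group $\mathcal{A}$ with identity $e$, let $G(\mathcal{A})=\{\Omega\subseteq\mathcal{A}:\Omega^{-1}=\Omega,\ \langle\Omega\rangle=\mathcal{A},\ e\notin\Omega\}$. For $k\ge1$ let $a_k(\mathcal{A})$ be the number of orbits of the inner automorphism group $\mathrm{Inn}(\mathcal{A})$ (acting by $\alpha\cdot\Omega=\alpha(\Omega)$) on $\{\Omega\in G(\mathcal{A}):|\Omega|=k\}$; $\Psi_{\mathcal{A}}(x)=\sum_{k=1}^{|\mathcal{A}|-1}a_k(\mathcal{A})x^k$ and $\mathcal{E}(\mathcal{A})=\Psi_{\mathcal{A}}(1)$. For the cyclic (abelian) group $\mathbb{Z}_n$, $\mathrm{Inn}$ is trivial, so $a_k(\mathbb{Z}_n)$ is the number of inverse-closed generating subsets of $\mathbb{Z}_n\setminus\{0\}$ of size $k$. *)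

theory Defs
  imports "HOL-Algebra.Elementary_Groups" "HOL-Algebra.Generated_Groups"
    "HOL-Computational_Algebra.Polynomial" "HOL-Computational_Algebra.Squarefree"
begin

definition moebius_mu :: "nat \<Rightarrow> int" where
  "moebius_mu m = (if m = 0 \<or> \<not> squarefree m then 0 else (-1) ^ card (prime_factors m))"

definition gen_inv_sets :: "('a, 'b) monoid_scheme \<Rightarrow> nat \<Rightarrow> 'a set set" where
  "gen_inv_sets G k = {\<Omega>. \<Omega> \<subseteq> carrier G \<and> m_inv G ` \<Omega> = \<Omega>
      \<and> generate G \<Omega> = carrier G \<and> \<one>\<^bsub>G\<^esub> \<notin> \<Omega> \<and> card \<Omega> = k}"

definition inn_rel :: "('a, 'b) monoid_scheme \<Rightarrow> 'a set set \<Rightarrow> ('a set \<times> 'a set) set" where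
  "inn_rel G S = {(\<Omega>, \<Omega>'). \<Omega> \<in> S \<and> \<Omega>' \<in> S \<and>
      (\<exists>g \<in> carrier G. \<Omega>' = (\<lambda>x. g \<otimes>\<^bsub>G\<^esub> x \<otimes>\<^bsub>G\<^esub> inv\<^bsub>G\<^esub> g) ` \<Omega>)}"

definition a_k :: "('a, 'b) monoid_scheme \<Rightarrow> nat \<Rightarrow> nat" where
  "a_k G k = card (gen_inv_sets G k // inn_rel G (gen_inv_sets G k))"

definition Psi :: "('a, 'b) monoid_scheme \<Rightarrow> int poly" where
  "Psi G = (\<Sum>k\<in>{1..card (carrier G) - 1}. monom (int (a_k G k)) k)"

definition E_count :: "('a, 'b) monoid_scheme \<Rightarrow> int" where
  "E_count G = poly (Psi G) 1"

end

theory Submission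
  imports Defs
begin

text \<open>
  For the abelian group Z_n the inner-automorphism orbits are singletons, so
  a_k(Z_n) counts the inverse-closed generating subsets of size k avoiding 0.  Such a subset is a
  subset S of {1, ..., n-1} that is symmetric (x in S implies n - x in S) and primitive
  (gcd of n and the elements of S is 1).

  Without the primitivity condition the count is explicit: the symmetric subsets are unions of
  orbits {x, n-x} of the reflection, and a recursion n -> n+2 shows that their size polynomial is
  (1+x^2)^floor((n-1)/2) (1+x)^[n even].  Scaling by e identifies the symmetric subsets whose gcd
  with n is e with the primitive symmetric subsets for n/e, so the closed form is a divisor sum
  of the primitive size polynomials; Moebius inversion then gives the primitive ones.
\<close>

lemma moebius_mu_eq_0_if_square_dvd:
  assumes "prime p" and "p ^ 2 dvd d"
  shows "moebius_mu d = 0"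
  using assms unfolding moebius_mu_def squarefree_def by (metis not_prime_unit)

lemma moebius_mu_prime_mult:
  assumes p: "prime p" and "d > 0" and "\<not> p dvd d"
  shows "moebius_mu (p * d) = - moebius_mu d"
proof -
  have "coprime p d" using assms by (simp add: prime_imp_coprime)
  then have squarefree: "squarefree (p * d) \<longleftrightarrow> squarefree d"
    using squarefree_prime[OF p] by (metis squarefree_mult_coprime mult.commute squarefree_multD(2))
  have "prime_factors (p * d) = insert p (prime_factors d)"
    using prime_factors_product[of p d] assms by (auto simp: prime_prime_factors)
  moreover have "p \<notin> prime_factors d" using assms by auto
  ultimately have "card (prime_factors (p * d)) = Suc (card (prime_factors d))" by simp
  then show ?thesis using squarefree assms unfolding moebius_mu_def by (auto simp: prime_gt_0_nat)
qed

text \<open>Pair each divisor d prime to a fixed prime factor p with p*d; all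
  other divisors divisible by p are not squarefree.\<close>

lemma moebius_divisor_sum:
  assumes "m > (0::nat)"
  shows "(\<Sum>d | d dvd m. moebius_mu d) = (if m = 1 then 1 else 0)"
proof (cases "m = 1")
  case False
  with assms obtain p where p: "prime p" "p dvd m" using prime_factor_nat[of m] by auto
  let ?coprime = "{d. d dvd m \<and> \<not> p dvd d}" and ?multiple = "{d. d dvd m \<and> p dvd d}"
  have fin: "finite {d. d dvd m}" using assms by simp
  have "(\<Sum>d | d dvd m. moebius_mu d) = (\<Sum>d\<in>?coprime. moebius_mu d) + (\<Sum>d\<in>?multiple. moebius_mu d)"
    by (subst sum.union_disjoint[symmetric]) (auto intro: finite_subset[OF _ fin] intro!: sum.cong)
  also have "(\<Sum>d\<in>?multiple. moebius_mu d) = (\<Sum>d\<in>(*) p ` ?coprime. moebius_mu d)"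
  proof (rule sum.mono_neutral_right)
    show "finite ?multiple" by (rule finite_subset[OF _ fin]) auto
    show "(*) p ` ?coprime \<subseteq> ?multiple"
      using p by (auto simp: prime_imp_coprime divides_mult)
    show "\<forall>i\<in>?multiple - (*) p ` ?coprime. moebius_mu i = 0"
    proof
      fix i assume i: "i \<in> ?multiple - (*) p ` ?coprime"
      then obtain j where j: "i = p * j" by auto
      with i have "p dvd j" by (auto intro: dvd_mult_right)
      then have "p ^ 2 dvd i" using j by (simp add: power2_eq_square)
      then show "moebius_mu i = 0" using moebius_mu_eq_0_if_square_dvd p by blast
    qed
  qed
  also have "\<dots> = (\<Sum>d\<in>?coprime. - moebius_mu d)"
    using p assms by (subst sum.reindex)
      (auto simp: inj_on_def prime_gt_0_nat intro!: sum.cong moebius_mu_prime_mult intro: Nat.gr0I)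
  finally show ?thesis using False by (simp add: sum_negf)
qed (simp add: moebius_mu_def)

lemma divisor_sum_complement:
  assumes "n > (0::nat)"
  shows "(\<Sum>d | d dvd n. f (n div d)) = (\<Sum>d | d dvd n. f d)"
  using assms by (intro sum.reindex_bij_witness[of _ "(div) n" "(div) n"]) (auto elim: dvdE)

text \<open>The same identity in complementary form, with values in any commutative ring; it also
  accounts for the constant term that separates the primitive size polynomial from Psi.\<close>

lemma moebius_sum_complement:
  assumes "n > 0"
  shows "(\<Sum>d | d dvd n. of_int (moebius_mu (n div d)) :: 'a::comm_ring_1) = (if n = 1 then 1 else 0)"
  using assms by (simp add: divisor_sum_complement of_int_sum[symmetric] moebius_divisor_sum)

lemma moebius_inversion:
  fixes f g :: "nat \<Rightarrow> 'a::comm_ring_1"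
  assumes g: "\<And>m. m > 0 \<Longrightarrow> g m = (\<Sum>d | d dvd m. f d)" and n: "n > 0"
  shows "f n = (\<Sum>d | d dvd n. of_int (moebius_mu (n div d)) * g d)"
proof -
  let ?D = "{d. d dvd n}"
  have fin: "finite ?D" using n by simp
  have inner: "(\<Sum>d | d dvd n \<and> e dvd d. moebius_mu (n div d)) = (if e = n then 1 else 0)"
    if e: "e dvd n" for e
  proof -
    obtain k where k: "n = e * k" using e by (auto elim!: dvdE)
    with n have pos: "e > 0" "k > 0" by auto
    have "(\<Sum>d | d dvd n \<and> e dvd d. moebius_mu (n div d)) = (\<Sum>j | j dvd k. moebius_mu (k div j))"
      using k pos by (intro sum.reindex_bij_witness[of _ "(*) e" "\<lambda>d. d div e"]) (auto elim!: dvdE)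
    also have "\<dots> = (if k = 1 then 1 else 0)"
      using moebius_sum_complement[OF \<open>k > 0\<close>, where 'a = int] by simp
    finally show ?thesis using k pos by simp
  qed
  have "(\<Sum>d\<in>?D. of_int (moebius_mu (n div d)) * g d)
      = (\<Sum>d\<in>?D. \<Sum>e | e \<in> ?D \<and> e dvd d. of_int (moebius_mu (n div d)) * f e)"
  proof (rule sum.cong[OF refl])
    fix d assume d: "d \<in> ?D"
    then have "{e. e dvd d} = {e. e \<in> ?D \<and> e dvd d}" by (auto intro: dvd_trans)
    moreover have "d > 0" using d n by (auto intro: Nat.gr0I)
    ultimately have "g d = (\<Sum>e | e \<in> ?D \<and> e dvd d. f e)" using g by simp
    then show "of_int (moebius_mu (n div d)) * g d
        = (\<Sum>e | e \<in> ?D \<and> e dvd d. of_int (moebius_mu (n div d)) * f e)"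
      by (simp add: sum_distrib_left)
  qed
  also have "\<dots> = (\<Sum>e\<in>?D. \<Sum>d | d \<in> ?D \<and> e dvd d. of_int (moebius_mu (n div d)) * f e)"
    by (rule sum.swap_restrict[OF fin fin])
  also have "\<dots> = (\<Sum>e\<in>?D. of_int (\<Sum>d | d dvd n \<and> e dvd d. moebius_mu (n div d)) * f e)"
    by (simp add: sum_distrib_right of_int_sum)
  also have "\<dots> = (\<Sum>e\<in>?D. if e = n then f e else 0)"
    by (rule sum.cong[OF refl]) (simp add: inner)
  also have "\<dots> = f n" using fin by (simp add: sum.delta)
  finally show ?thesis by simp
qed

definition size_poly :: "'a set set \<Rightarrow> int poly" where
  "size_poly F = (\<Sum>S\<in>F. monom 1 (card S))"

lemma size_poly_image:
  assumes "inj_on h F" and "\<And>S. S \<in> F \<Longrightarrow> card (h S) = card S"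
  shows "size_poly (h ` F) = size_poly F"
  using assms unfolding size_poly_def by (simp add: sum.reindex)

lemma size_poly_join:
  assumes A: "finite A" "\<And>T. T \<in> A \<Longrightarrow> finite T"
    and B: "finite B" "\<And>P. P \<in> B \<Longrightarrow> finite P"
    and disjoint: "\<Union>A \<inter> \<Union>B = {}"
  shows "size_poly ((\<lambda>(T, P). T \<union> P) ` (A \<times> B)) = size_poly A * size_poly B"
proof -
  have inj: "inj_on (\<lambda>(T, P). T \<union> P) (A \<times> B)"
  proof (rule inj_onI, clarify)
    fix T P T' P' assume "T \<in> A" "P \<in> B" "T' \<in> A" "P' \<in> B" and eq: "T \<union> P = T' \<union> P'"
    then have "T = (T \<union> P) \<inter> \<Union>A" "T' = (T' \<union> P') \<inter> \<Union>A"
      "P = (T \<union> P) \<inter> \<Union>B" "P' = (T' \<union> P') \<inter> \<Union>B"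
      using disjoint by blast+
    then show "T = T' \<and> P = P'" using eq by metis
  qed
  have card: "card (T \<union> P) = card T + card P" if "T \<in> A" "P \<in> B" for T P
    using that A B disjoint by (intro card_Un_disjoint) blast+
  have "size_poly ((\<lambda>(T, P). T \<union> P) ` (A \<times> B))
      = (\<Sum>(T, P)\<in>A \<times> B. monom 1 (card T + card P))"
    unfolding size_poly_def by (subst sum.reindex[OF inj]) (auto intro!: sum.cong simp: card)
  also have "\<dots> = size_poly A * size_poly B"
    unfolding size_poly_def sum_product sum.cartesian_product by (simp add: mult_monom)
  finally show ?thesis .
qed

text \<open>The subsets of {1, ..., n-1} closed under the reflection x \<mapsto> n - x.  (These are the
  inverse-closed subsets of Z_n without 0, not yet required to generate.)\<close>

definition sym_subsets :: "nat \<Rightarrow> int set set" where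
  "sym_subsets n = {S. S \<subseteq> {1..<int n} \<and> (\<forall>x\<in>S. int n - x \<in> S)}"

lemma finite_sym_subsets: "finite (sym_subsets n)"
  by (rule finite_subset[of _ "Pow {1..<int n}"]) (auto simp: sym_subsets_def)

lemma finite_sym_subset: "S \<in> sym_subsets n \<Longrightarrow> finite S"
  unfolding sym_subsets_def by (auto intro: finite_subset)

lemma sym_subsets_add_2:
  assumes "n \<ge> 1"
  shows "sym_subsets (n + 2)
    = (\<lambda>(T, P). T \<union> P) ` (((`) ((+) 1) ` sym_subsets n) \<times> {{}, {1, int n + 1}})"
    (is "_ = ?join")
proof (intro Set.set_eqI iffI)
  fix S assume S: "S \<in> sym_subsets (n + 2)"
  then have S_range: "S \<subseteq> {1..<int n + 2}" and S_sym: "\<And>x. x \<in> S \<Longrightarrow> int n + 2 - x \<in> S"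
    unfolding sym_subsets_def by (auto simp: add.commute)
  define T where "T = (\<lambda>x. x - 1) ` (S - {1, int n + 1})"
  have shift: "(+) 1 ` T = S - {1, int n + 1}" unfolding T_def by (auto simp: image_image)
  have "T \<in> sym_subsets n"
  proof -
    have "T \<subseteq> {1..<int n}" unfolding T_def using S_range by force
    moreover have "int n - y \<in> T" if "y \<in> T" for y
    proof -
      obtain x where x: "x \<in> S" "x \<noteq> 1" "x \<noteq> int n + 1" "y = x - 1"
        using \<open>y \<in> T\<close> unfolding T_def by auto
      have "int n + 2 - x \<in> S - {1, int n + 1}" using S_sym[OF x(1)] x by auto
      moreover have "int n - y = (int n + 2 - x) - 1" using x(4) by simp
      ultimately show ?thesis unfolding T_def by blast
    qed
    ultimately show ?thesis unfolding sym_subsets_def by blast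
  qed
  moreover have "1 \<in> S \<longleftrightarrow> int n + 1 \<in> S"
    using S_sym[of 1] S_sym[of "int n + 1"] by (auto simp: add.commute)
  ultimately show "S \<in> ?join" using shift
    by (cases "1 \<in> S") (auto simp: image_iff intro!: bexI[of _ "(T, _)"])
next
  fix S assume "S \<in> ?join"
  then obtain T P where T: "T \<in> sym_subsets n" and P: "P = {} \<or> P = {1, int n + 1}"
    and S: "S = (+) 1 ` T \<union> P" by auto
  have T_range: "T \<subseteq> {1..<int n}" and T_sym: "\<And>x. x \<in> T \<Longrightarrow> int n - x \<in> T"
    using T unfolding sym_subsets_def by auto
  have "int n + 2 - (x + 1) \<in> (+) 1 ` T" if "x \<in> T" for x
    using T_sym[OF that] by (force simp: image_iff)
  then show "S \<in> sym_subsets (n + 2)"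
    using assms P T_range unfolding S sym_subsets_def by (auto simp: add.commute)
qed

lemma size_poly_sym_subsets_add_2:
  assumes "n \<ge> 1"
  shows "size_poly (sym_subsets (n + 2)) = size_poly (sym_subsets n) * [:1, 0, 1:]"
proof -
  let ?shifted = "(`) ((+) 1) ` sym_subsets n" and ?ends = "{{}, {1, int n + 1}}"
  have "size_poly ?shifted = size_poly (sym_subsets n)"
    by (rule size_poly_image) (auto simp: inj_on_def inj_image_eq_iff card_image)
  moreover have "size_poly ?ends = [:1, 0, 1:]"
    using assms by (simp add: size_poly_def monom_altdef power2_eq_square one_pCons)
  moreover have "\<Union>?shifted \<inter> \<Union>?ends = {}"
    by (auto simp: sym_subsets_def)
  ultimately show ?thesis
    unfolding sym_subsets_add_2[OF assms]
    by (subst size_poly_join) (auto simp: finite_sym_subsets finite_sym_subset)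
qed

text \<open>The closed form of the size polynomial of the symmetric subsets: every orbit {x, n-x} of size
  two contributes a factor 1 + x^2, the fixed point n/2 (if n is even) a factor 1 + x.\<close>

definition sym_poly :: "nat \<Rightarrow> int poly" where
  "sym_poly n = [:1, 0, 1:] ^ ((n - 1) div 2) * (if even n then [:1, 1:] else 1)"

theorem size_poly_sym_subsets:
  assumes "n \<ge> 1"
  shows "size_poly (sym_subsets n) = sym_poly n"
  using assms
proof (induction n rule: less_induct)
  case (less n)
  consider "n = 1" | "n = 2" | "n \<ge> 3"
    using less.prems by linarith
  then show ?case
  proof cases
    case 1
    then have "sym_subsets n = {{}}" by (auto simp: sym_subsets_def)
    then show ?thesis using 1 by (simp add: size_poly_def sym_poly_def)
  next
    case 2
    then have "sym_subsets n = Pow {1}" by (auto simp: sym_subsets_def)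
    also have "Pow {1} = {{}, {1::int}}" by blast
    finally show ?thesis using 2 by (simp add: size_poly_def sym_poly_def monom_altdef one_pCons)
  next
    case 3
    define m where "m = n - 2"
    have m: "n = m + 2" "m \<ge> 1" using 3 by (simp_all add: m_def)
    then have "size_poly (sym_subsets n) = sym_poly m * [:1, 0, 1:]"
      using less.IH[of m] size_poly_sym_subsets_add_2 by simp
    also have "\<dots> = sym_poly n"
    proof -
      have "(n - 1) div 2 = Suc ((m - 1) div 2)" and "even n \<longleftrightarrow> even m" using m by auto
      then show ?thesis unfolding sym_poly_def by (simp add: ac_simps)
    qed
    finally show ?thesis .
  qed
qed

text \<open>Symmetric subsets that generate Z_n, in arithmetic form: the gcd of n and the elements is 1.\<close>

definition primitive_sym_subsets :: "nat \<Rightarrow> int set set" where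
  "primitive_sym_subsets n = {S \<in> sym_subsets n. Gcd (insert (int n) S) = 1}"

lemma scaled_sym_subsets_iff:
  assumes "e > 0"
  shows "(*) (int e) ` T \<in> sym_subsets (e * m) \<longleftrightarrow> T \<in> sym_subsets m"
proof -
  have range: "int e * x \<in> {1..<int (e * m)} \<longleftrightarrow> x \<in> {1..<int m}" for x
    using assms by (simp add: int_one_le_iff_zero_less zero_less_mult_iff mult_less_cancel_left_pos)
  have reflect: "int (e * m) - int e * x \<in> (*) (int e) ` T \<longleftrightarrow> int m - x \<in> T" for x
  proof -
    have "int (e * m) - int e * x = int e * (int m - x)" by (simp add: algebra_simps)
    then show ?thesis using assms by (auto simp: image_iff)
  qed
  have "(*) (int e) ` T \<subseteq> {1..<int (e * m)} \<longleftrightarrow> T \<subseteq> {1..<int m}"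
    using range by blast
  moreover have "(\<forall>y\<in>(*) (int e) ` T. int (e * m) - y \<in> (*) (int e) ` T) \<longleftrightarrow> (\<forall>x\<in>T. int m - x \<in> T)"
    using reflect by blast
  ultimately show ?thesis unfolding sym_subsets_def mem_Collect_eq by blast
qed

lemma Gcd_scaled:
  "Gcd (insert (int (e * m)) ((*) (int e) ` T)) = int e * Gcd (insert (int m) T)"
proof -
  have "Gcd (insert (int (e * m)) ((*) (int e) ` T)) = Gcd ((*) (int e) ` insert (int m) T)" by simp
  also have "\<dots> = normalize (int e * Gcd (insert (int m) T))" by (rule Gcd_mult)
  also have "\<dots> = int e * Gcd (insert (int m) T)" by (simp add: abs_mult)
  finally show ?thesis .
qed

lemma sym_subsets_with_Gcd:
  assumes "n > 0" and "e dvd n"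
  shows "{S \<in> sym_subsets n. Gcd (insert (int n) S) = int e}
    = (`) ((*) (int e)) ` primitive_sym_subsets (n div e)"
proof -
  define m where "m = n div e"
  have n: "n = e * m" and e: "e > 0" using assms by (auto simp: m_def intro: Nat.gr0I)
  show ?thesis
  proof (intro Set.set_eqI iffI)
    fix S assume "S \<in> {S \<in> sym_subsets n. Gcd (insert (int n) S) = int e}"
    then have S: "S \<in> sym_subsets n" and gcd: "Gcd (insert (int n) S) = int e" by auto
    define T where "T = (\<lambda>x. x div int e) ` S"
    have "int e dvd x" if "x \<in> S" for x using that gcd by (metis Gcd_dvd insertI2)
    then have scaled: "S = (*) (int e) ` T" unfolding T_def by (force simp: image_iff)
    then have "T \<in> sym_subsets m" using S scaled_sym_subsets_iff[OF e] n by simp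
    moreover have "Gcd (insert (int m) T) = 1" using gcd Gcd_scaled[of e m T] scaled n e by simp
    ultimately show "S \<in> (`) ((*) (int e)) ` primitive_sym_subsets (n div e)"
      using scaled by (auto simp: primitive_sym_subsets_def m_def)
  next
    fix S assume "S \<in> (`) ((*) (int e)) ` primitive_sym_subsets (n div e)"
    then obtain T where T: "T \<in> primitive_sym_subsets m" and S: "S = (*) (int e) ` T"
      by (auto simp: m_def)
    then show "S \<in> {S \<in> sym_subsets n. Gcd (insert (int n) S) = int e}"
      using scaled_sym_subsets_iff[OF e] Gcd_scaled[of e m T] n
      by (simp add: primitive_sym_subsets_def)
  qed
qed

text \<open>Sorting symmetric subsets by their gcd with n gives a divisor sum over primitive ones.\<close>

theorem size_poly_sym_subsets_by_Gcd:
  assumes "n > 0"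
  shows "size_poly (sym_subsets n) = (\<Sum>d | d dvd n. size_poly (primitive_sym_subsets d))"
proof -
  let ?Gcd = "\<lambda>S. nat (Gcd (insert (int n) S))"
  have Gcd_dvd_n: "?Gcd S \<in> {d. d dvd n}" for S
    using Gcd_dvd[of "int n" "insert (int n) S"] by (simp add: nat_dvd_iff)
  have "size_poly (sym_subsets n)
      = (\<Sum>e | e dvd n. size_poly {S \<in> sym_subsets n. ?Gcd S = e})"
    unfolding size_poly_def using assms Gcd_dvd_n
    by (intro sum.group[symmetric] finite_sym_subsets) auto
  also have "\<dots> = (\<Sum>e | e dvd n. size_poly (primitive_sym_subsets (n div e)))"
  proof (rule sum.cong[OF refl])
    fix e assume e: "e \<in> {e. e dvd n}"
    then have "e > 0" using assms by (auto intro: Nat.gr0I)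
    have "{S \<in> sym_subsets n. ?Gcd S = e} = {S \<in> sym_subsets n. Gcd (insert (int n) S) = int e}"
      by (auto simp: nat_eq_iff2)
    also have "\<dots> = (`) ((*) (int e)) ` primitive_sym_subsets (n div e)"
      using assms e by (intro sym_subsets_with_Gcd) auto
    finally show "size_poly {S \<in> sym_subsets n. ?Gcd S = e} = size_poly (primitive_sym_subsets (n div e))"
      using \<open>e > 0\<close> by (auto intro!: size_poly_image simp: inj_on_def inj_image_eq_iff card_image)
  qed
  also have "\<dots> = (\<Sum>d | d dvd n. size_poly (primitive_sym_subsets d))"
    using assms by (rule divisor_sum_complement)
  finally show ?thesis .
qed

corollary size_poly_primitive_sym_subsets:
  assumes "n > 0"
  shows "size_poly (primitive_sym_subsets n)
    = (\<Sum>d | d dvd n. of_int (moebius_mu (n div d)) * sym_poly d)"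
  using size_poly_sym_subsets size_poly_sym_subsets_by_Gcd assms
  by (intro moebius_inversion) (auto simp: Suc_le_eq)

text \<open>In an abelian group conjugation is trivial, so the inner-automorphism orbit relation is the
  identity and a_k counts the generating inverse-closed sets themselves.\<close>

lemma inn_rel_comm_group:
  fixes G (structure)
  assumes "comm_group G" and "\<And>A. A \<in> S \<Longrightarrow> A \<subseteq> carrier G"
  shows "inn_rel G S = Id_on S"
proof -
  interpret comm_group G by (rule assms(1))
  have conj: "(\<lambda>x. g \<otimes> x \<otimes> inv g) ` A = A" if "g \<in> carrier G" "A \<subseteq> carrier G" for g A
  proof -
    have "g \<otimes> x \<otimes> inv g = x" if "x \<in> A" for x
      using that \<open>g \<in> carrier G\<close> \<open>A \<subseteq> carrier G\<close> by (metis subsetD inv_closed m_comm m_assoc r_inv r_one)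
    then show ?thesis by simp
  qed
  show ?thesis
  proof (intro Set.set_eqI iffI)
    fix p assume "p \<in> inn_rel G S"
    then show "p \<in> Id_on S" unfolding inn_rel_def using conj assms(2) by auto
  next
    fix p assume "p \<in> Id_on S"
    then obtain A where p: "p = (A, A)" "A \<in> S" by (auto simp: Id_on_def)
    then have "A = (\<lambda>x. \<one> \<otimes> x \<otimes> inv \<one>) ` A"
      using conj[OF one_closed assms(2)] by simp
    then show "p \<in> inn_rel G S" unfolding inn_rel_def using p one_closed by blast
  qed
qed

lemma a_k_comm_group:
  assumes "comm_group G"
  shows "a_k G k = card (gen_inv_sets G k)"
proof -
  have "inn_rel G (gen_inv_sets G k) = Id_on (gen_inv_sets G k)"
    using assms by (rule inn_rel_comm_group) (auto simp: gen_inv_sets_def)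
  moreover have "card (A // Id_on A) = card A" for A :: "'a set set"
  proof -
    have "A // Id_on A = (\<lambda>x. {x}) ` A" unfolding quotient_def by auto
    then show ?thesis by (simp add: card_image)
  qed
  ultimately show ?thesis unfolding a_k_def by simp
qed

text \<open>A subset of Z_n generates iff its elements are coprime together with n.  If the gcd g of n and
  the elements is a proper divisor, all generated elements are multiples of g.\<close>

lemma integer_mod_group_generate_imp_Gcd:
  assumes n: "n \<ge> 1" and S: "S \<subseteq> {0..<int n}"
    and gen: "generate (integer_mod_group n) S = carrier (integer_mod_group n)"
  shows "Gcd (insert (int n) S) = 1"
proof -
  let ?Z = "integer_mod_group n" and ?g = "Gcd (insert (int n) S)"
  let ?multiples = "{x \<in> {0..<int n}. ?g dvd x}"
  have g_dvd_n: "?g dvd int n" by (rule Gcd_dvd) simp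
  have multiples: "subgroup ?multiples ?Z"
  proof (rule group.subgroupI[OF group_integer_mod_group])
    show "?multiples \<subseteq> carrier ?Z" "?multiples \<noteq> {}"
      using n by (auto simp: carrier_integer_mod_group intro!: exI[of _ 0])
  next
    fix a b assume "a \<in> ?multiples" "b \<in> ?multiples"
    then show "inv\<^bsub>?Z\<^esub> a \<in> ?multiples" "a \<otimes>\<^bsub>?Z\<^esub> b \<in> ?multiples"
      using n g_dvd_n by (auto simp: carrier_integer_mod_group dvd_mod_iff)
  qed
  have "?g dvd s" if "s \<in> S" for s by (rule Gcd_dvd) (simp add: that)
  then have "S \<subseteq> ?multiples" using S by auto
  then have "generate ?Z S \<subseteq> ?multiples"
    by (rule group.generate_subgroup_incl[OF group_integer_mod_group _ multiples])
  then have "carrier ?Z \<subseteq> ?multiples" unfolding gen .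
  then have "?g dvd 1"
  proof (cases "n = 1")
    case False
    then show ?thesis using \<open>carrier ?Z \<subseteq> ?multiples\<close> integer_mod_group_1[of n] by blast
  qed (use g_dvd_n in simp)
  then show ?thesis by simp
qed

text \<open>Conversely, the integers whose residue is generated form an ideal containing n and the elements,
  hence (Bezout) their gcd 1.\<close>

lemma Gcd_imp_integer_mod_group_generate:
  assumes n: "n \<ge> 1" and S: "S \<subseteq> {0..<int n}" and gcd: "Gcd (insert (int n) S) = 1"
  shows "generate (integer_mod_group n) S = carrier (integer_mod_group n)"
proof -
  let ?Z = "integer_mod_group n"
  let ?K = "generate ?Z S"
  have carrier: "carrier ?Z = {0..<int n}" using n by (simp add: carrier_integer_mod_group)
  have K: "subgroup ?K ?Z"
    using S carrier by (intro group.generate_is_subgroup) auto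
  define L where "L = {x. x mod int n \<in> ?K}"
  have add: "x + y \<in> L" if "x \<in> L" "y \<in> L" for x y
    using subgroup.m_closed[OF K that[unfolded L_def mem_Collect_eq]]
    by (simp add: L_def mod_add_eq)
  have scale: "c * x \<in> L" if "x \<in> L" for c x
  proof -
    have "(x mod int n) [^]\<^bsub>?Z\<^esub> c \<in> ?K"
      using that unfolding L_def by (simp add: group.subgroup_int_pow_closed[OF group_integer_mod_group K])
    then show ?thesis by (simp add: L_def int_pow_integer_mod_group mod_mult_right_eq)
  qed
  have S_L: "S \<subseteq> L"
  proof
    fix s assume "s \<in> S"
    then have "s mod int n = s" "s \<in> ?K" using S by (auto intro: generate.incl)
    then show "s \<in> L" by (simp add: L_def)
  qed
  have n_L: "int n \<in> L"
    using subgroup.one_closed[OF K] by (simp add: L_def)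
  have Gcd_L: "Gcd (insert (int n) S') \<in> L" if "finite S'" "S' \<subseteq> S" for S'
    using that
  proof (induction S' rule: finite_induct)
    case empty then show ?case using n_L by simp
  next
    case (insert s S')
    let ?g = "Gcd (insert (int n) S')"
    obtain u v where bezout: "u * s + v * ?g = gcd s ?g" using bezout_int by blast
    have "s \<in> L" "?g \<in> L" using insert S_L by auto
    then have "gcd s ?g \<in> L" unfolding bezout[symmetric] by (intro add scale)
    then show ?case by (simp add: insert_commute)
  qed
  have "finite S" using S by (rule finite_subset) simp
  then have "1 \<in> L" using Gcd_L[of S] gcd by simp
  have "x \<in> ?K" if "x \<in> {0..<int n}" for x
    using scale[OF \<open>1 \<in> L\<close>, of x] that by (simp add: L_def)
  moreover have "?K \<subseteq> carrier ?Z"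
    using S carrier by (intro group.generate_incl[OF group_integer_mod_group]) auto
  ultimately show ?thesis using carrier by blast
qed

text \<open>In Z_n the inverse of a nonzero residue x is n - x, so inverse-closure is symmetry under
  the reflection.\<close>

lemma inv_integer_mod_group_nonzero:
  assumes "x \<in> {1..<int n}"
  shows "inv\<^bsub>integer_mod_group n\<^esub> x = int n - x"
proof -
  have "int n - x = - x + int n" by simp
  then have "(- x) mod int n = (int n - x) mod int n" by (simp only: mod_add_self2)
  also have "\<dots> = int n - x" using assms by (intro mod_pos_pos_trivial) auto
  finally show ?thesis using assms by (simp add: carrier_integer_mod_group)
qed

lemma reflection_image_eq_iff:
  "(\<lambda>x. c - x) ` S = S \<longleftrightarrow> (\<forall>x\<in>S. c - x \<in> S)" for c :: int
proof
  assume "\<forall>x\<in>S. c - x \<in> S"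
  then have "x \<in> (\<lambda>x. c - x) ` S" if "x \<in> S" for x
    using that by (auto simp: image_iff intro!: bexI[of _ "c - x"])
  then show "(\<lambda>x. c - x) ` S = S" using \<open>\<forall>x\<in>S. c - x \<in> S\<close> by auto
qed auto

theorem gen_inv_sets_integer_mod_group:
  assumes n: "n \<ge> 1"
  shows "gen_inv_sets (integer_mod_group n) k = {S \<in> primitive_sym_subsets n. card S = k}"
proof (intro Set.set_eqI)
  fix S
  let ?Z = "integer_mod_group n"
  have carrier: "carrier ?Z = {0..<int n}" using n by (simp add: carrier_integer_mod_group)
  show "S \<in> gen_inv_sets ?Z k \<longleftrightarrow> S \<in> {S \<in> primitive_sym_subsets n. card S = k}"
  proof (cases "S \<subseteq> {1..<int n}")
    case True
    then have "m_inv ?Z ` S = (\<lambda>x. int n - x) ` S"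
      by (auto simp: inv_integer_mod_group_nonzero subset_iff)
    then have inv_closed: "m_inv ?Z ` S = S \<longleftrightarrow> (\<forall>x\<in>S. int n - x \<in> S)"
      by (simp add: reflection_image_eq_iff)
    have "S \<subseteq> {0..<int n}" using True by auto
    then have generates: "generate ?Z S = carrier ?Z \<longleftrightarrow> Gcd (insert (int n) S) = 1"
      using n integer_mod_group_generate_imp_Gcd Gcd_imp_integer_mod_group_generate by blast
    show ?thesis
      using True inv_closed generates carrier
      unfolding gen_inv_sets_def primitive_sym_subsets_def sym_subsets_def by auto
  next
    case False
    have "S \<subseteq> {1..<int n}" if "S \<subseteq> carrier ?Z" "0 \<notin> S"
    proof
      fix x assume "x \<in> S"
      then have "0 \<le> x" "x < int n" "x \<noteq> 0" using that carrier by auto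
      then show "x \<in> {1..<int n}" by simp
    qed
    then show ?thesis
      using False unfolding gen_inv_sets_def primitive_sym_subsets_def sym_subsets_def by auto
  qed
qed

lemma size_poly_by_card:
  assumes "finite F" and "\<And>S. S \<in> F \<Longrightarrow> card S \<le> N"
  shows "size_poly F = (\<Sum>k\<in>{0..N}. monom (int (card {S \<in> F. card S = k})) k)"
proof -
  have "size_poly F = (\<Sum>k\<in>{0..N}. \<Sum>S\<in>{S \<in> F. card S = k}. monom 1 (card S))"
    unfolding size_poly_def using assms by (intro sum.group[symmetric]) auto
  also have "\<dots> = (\<Sum>k\<in>{0..N}. \<Sum>S\<in>{S \<in> F. card S = k}. monom 1 k)"
    by (intro sum.cong) auto
  also have "\<dots> = (\<Sum>k\<in>{0..N}. monom (int (card {S \<in> F. card S = k})) k)"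
    by (simp add: of_nat_poly mult_monom monom_0[symmetric])
  finally show ?thesis .
qed

text \<open>Psi of Z_n is the size polynomial of the primitive symmetric subsets, except that the empty set
  (which generates the trivial group Z_1) contributes a constant term that Psi omits.\<close>

theorem Psi_integer_mod_group:
  assumes n: "n \<ge> 1"
  shows "Psi (integer_mod_group n)
    = size_poly (primitive_sym_subsets n) - (if n = 1 then 1 else 0)"
proof -
  let ?count = "\<lambda>k. card {S \<in> primitive_sym_subsets n. card S = k}"
  have finite: "finite (primitive_sym_subsets n)"
    using finite_sym_subsets by (simp add: primitive_sym_subsets_def)
  have card_le: "card S \<le> n - 1" if "S \<in> primitive_sym_subsets n" for S
    using that card_mono[of "{1..<int n}" S] by (auto simp: primitive_sym_subsets_def sym_subsets_def)
  have "size_poly (primitive_sym_subsets n) = (\<Sum>k\<in>{0..n - 1}. monom (int (?count k)) k)"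
    using finite card_le by (rule size_poly_by_card)
  also have "\<dots> = monom (int (?count 0)) 0 + (\<Sum>k\<in>{1..n - 1}. monom (int (?count k)) k)"
    by (subst atLeastAtMost_insertL[symmetric]) auto
  also have "(\<Sum>k\<in>{1..n - 1}. monom (int (?count k)) k) = Psi (integer_mod_group n)"
    using n unfolding Psi_def a_k_comm_group[OF abelian_integer_mod_group]
    by (simp add: gen_inv_sets_integer_mod_group carrier_integer_mod_group)
  also have "?count 0 = (if n = 1 then 1 else 0)"
  proof -
    have "{S \<in> primitive_sym_subsets n. card S = 0} = {S \<in> primitive_sym_subsets n. S = {}}"
      using finite_sym_subset by (auto simp: primitive_sym_subsets_def)
    also have "\<dots> = (if n = 1 then {{}} else {})"
      by (auto simp: primitive_sym_subsets_def sym_subsets_def)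
    finally show ?thesis by simp
  qed
  finally show ?thesis by simp
qed

lemma sym_poly_altdef:
  "sym_poly d = [:1, 0, 1:] ^ ((d - 1) div 2) * [:1, 1:] ^ nat ((1 + (-1) ^ d) div 2)"
  by (simp add: sym_poly_def)

lemma poly_sym_poly_1:
  assumes "d > 0"
  shows "poly (sym_poly d) 1 = 2 ^ (d div 2)"
proof (cases "even d")
  case True
  then obtain j where "d = 2 * j" "j > 0" using assms by auto
  then show ?thesis by (simp add: sym_poly_def power_Suc[symmetric] del: power_Suc)
next
  case False
  then have "(d - 1) div 2 = d div 2" by (auto elim: oddE)
  then show ?thesis using False by (simp add: sym_poly_def)
qed

theorem corollary3p2:
  fixes n :: nat
  assumes "n \<ge> 1"
  shows "Psi (integer_mod_group n) =
           (\<Sum>d | d dvd n. smult (moebius_mu (n div d))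
              ([:1, 0, 1:] ^ ((d - 1) div 2) * [:1, 1:] ^ nat ((1 + (-1) ^ d) div 2) - 1))
       \<and> E_count (integer_mod_group n) = poly (Psi (integer_mod_group n)) 1
       \<and> E_count (integer_mod_group n) =
           (\<Sum>d | d dvd n. moebius_mu (n div d) * (2 ^ (d div 2) - 1))"
proof -
  have n: "n > 0" using assms by simp
  have "Psi (integer_mod_group n)
      = (\<Sum>d | d dvd n. of_int (moebius_mu (n div d)) * sym_poly d)
        - (\<Sum>d | d dvd n. of_int (moebius_mu (n div d)))"
    using assms n by (simp add: Psi_integer_mod_group size_poly_primitive_sym_subsets moebius_sum_complement)
  also have "\<dots> = (\<Sum>d | d dvd n. smult (moebius_mu (n div d)) (sym_poly d - 1))"
    by (simp add: sum_subtractf smult_diff_right of_int_poly)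
  finally have Psi: "Psi (integer_mod_group n)
      = (\<Sum>d | d dvd n. smult (moebius_mu (n div d)) (sym_poly d - 1))" .
  have "poly (Psi (integer_mod_group n)) 1 = (\<Sum>d | d dvd n. moebius_mu (n div d) * (2 ^ (d div 2) - 1))"
    unfolding Psi poly_sum using n by (intro sum.cong) (auto simp: poly_sym_poly_1 intro: Nat.gr0I)
  then show ?thesis using Psi by (simp add: E_count_def sym_poly_altdef)
qed

end
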